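(* Let $\xi_0,\xi_1,\xi_2,\ldots$ be independent and identically distributed real random variables such that $\xi_0$ has zero mean, finite positive variance, and a moment generating function that exists on an open interval around zero. For $n\ge1$ define $\eta_j=\xi_{\min(j,n-j)}$ for $0\le j\le n-1$ (so $\eta_j=\eta_{n-j}$ for $1\le j\le n-1$) and for $x\in\mathbb{T}=\mathbb{R}/(2\pi\mathbb{Z})$ let $W^{sym}_n(x)=\sum_{j=0}^{n-1}\eta_j e^{ijx}$, with $\|W^{sym}_n\|_\infty=\max_{x\in\mathbb{T}}|W^{sym}_n(x)|$. Then \[ \mathbb{P}\left(\|W^{sym}_n\|_\infty\ge C_0(n\log n)^{1/2}\right)\le\frac{C_1}{n^2}, \] where $C_0,C_1>0$ depend only on the distribution of $\xi_0$.
   Context: Here $i$ is the imaginary unit. The coefficients with indices $0,1,\ldots,\lfloor n/2\rfloor$ are independent, and the remaining ones mirror them via $\eta_j=\eta_{n-j}$. *)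

theory Defs
  imports "HOL-Probability.Probability"
begin

definition sym_coeff :: "(nat \<Rightarrow> 'w \<Rightarrow> real) \<Rightarrow> nat \<Rightarrow> nat \<Rightarrow> 'w \<Rightarrow> real" where
  "sym_coeff \<xi> n j \<omega> = \<xi> (min j (n - j)) \<omega>"

text \<open>W^sym_n(x) = sum_{j=0}^{n-1} eta_j e^{ijx}, for x real (2pi-periodic, i.e. x on the torus).\<close>
definition Wsym :: "(nat \<Rightarrow> 'w \<Rightarrow> real) \<Rightarrow> nat \<Rightarrow> 'w \<Rightarrow> real \<Rightarrow> complex" where
  "Wsym \<xi> n \<omega> x = (\<Sum>j<n. complex_of_real (sym_coeff \<xi> n j \<omega>) * exp (\<i> * complex_of_real (real j * x)))"

text \<open>Sup norm over the torus; since W is 2pi-periodic and continuous this is the max over T.\<close>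
definition Wsym_supnorm :: "(nat \<Rightarrow> 'w \<Rightarrow> real) \<Rightarrow> nat \<Rightarrow> 'w \<Rightarrow> real" where
  "Wsym_supnorm \<xi> n \<omega> = (SUP x\<in>UNIV. cmod (Wsym \<xi> n \<omega> x))"

end

theory Submission
  imports Defs
begin

text \<open>
  Discretise the torus by a grid of mesh n^-4. The polynomial is (n * sum_j |eta_j|)-Lipschitz,
  so outside the event sum_j |eta_j| >= n^3, which has probability O(n^-2) by Markov's inequality,
  the sup norm exceeds the largest grid value by at most 1. At a fixed point the real and
  imaginary parts of W are sums sum_j b_j xi_(min j (n-j)) with |b_j| <= 1; collecting equal
  indices turns them into sums of independent terms with coefficients at most 2. Zero mean and
  a finite mgf near 0 give E exp(s xi) <= exp(B s^2) for small |s|, so a Chernoff bound with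
  s ~ (log n / n)^(1/2) shows that each grid value exceeds C0 (n log n)^(1/2) / 2 with
  probability O(n^-6). A union bound over the O(n^4) grid points finishes the proof.
\<close>

lemma exp_le_linear_plus_sq_exp_abs: "exp (y::real) \<le> 1 + y + y\<^sup>2 * exp \<bar>y\<bar>"
proof -
  obtain t where "\<bar>t\<bar> \<le> \<bar>y\<bar>" and exp_y: "exp y = (\<Sum>m<2. y ^ m / fact m) + exp t / fact 2 * y ^ 2"
    using Maclaurin_exp_le[of y 2] by blast
  then have "exp t \<le> exp \<bar>y\<bar>"
    by simp
  then have "exp t / 2 \<le> exp \<bar>y\<bar>"
    using exp_gt_zero[of t] by linarith
  then have "exp t / 2 * y\<^sup>2 \<le> y\<^sup>2 * exp \<bar>y\<bar>"
    by (metis mult.commute mult_right_mono zero_le_power2)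
  with exp_y show ?thesis by (simp add: numeral_2_eq_2)
qed

lemma sq_le_exp_abs:
  assumes "d > 0" shows "(x::real)\<^sup>2 \<le> 32 / d\<^sup>2 * exp (d * \<bar>x\<bar> / 4)"
proof -
  define u where "u = d * \<bar>x\<bar> / 4"
  have "u \<ge> 0" using assms by (simp add: u_def)
  then have "u\<^sup>2 \<le> 2 * exp u"
    using exp_lower_Taylor_quadratic[of u] by simp
  moreover have "x\<^sup>2 = 16 / d\<^sup>2 * u\<^sup>2"
    using assms by (simp add: u_def power2_eq_square field_simps)
  ultimately have "x\<^sup>2 \<le> 16 / d\<^sup>2 * (2 * exp u)"
    by (metis mult_left_mono divide_nonneg_nonneg zero_le_power2 zero_le_numeral)
  then show ?thesis
    unfolding u_def by simp
qed

context prob_space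
begin

definition local_subgaussian :: "('a \<Rightarrow> real) \<Rightarrow> real \<Rightarrow> real \<Rightarrow> bool" where
  "local_subgaussian X B s\<^sub>0 \<longleftrightarrow> (\<forall>s. \<bar>s\<bar> \<le> s\<^sub>0 \<longrightarrow>
     integrable M (\<lambda>\<omega>. exp (s * X \<omega>)) \<and> expectation (\<lambda>\<omega>. exp (s * X \<omega>)) \<le> exp (B * s\<^sup>2))"

lemma local_subgaussian_mono:
  "local_subgaussian X B s\<^sub>0 \<Longrightarrow> s\<^sub>1 \<le> s\<^sub>0 \<Longrightarrow> local_subgaussian X B s\<^sub>1"
  unfolding local_subgaussian_def by simp

lemma local_subgaussian_if_mgf_exists:
  fixes X :: "'a \<Rightarrow> real"
  assumes X[measurable]: "X \<in> borel_measurable M" and "integrable M X" and "expectation X = 0"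
    and "\<delta> > 0" and mgf: "\<And>s. \<bar>s\<bar> < \<delta> \<Longrightarrow> integrable M (\<lambda>\<omega>. exp (s * X \<omega>))"
  shows "\<exists>B\<ge>0. local_subgaussian X B (\<delta> / 4)"
proof -
  define G where "G \<omega> = 32 / \<delta>\<^sup>2 * (exp (\<delta> / 2 * X \<omega>) + exp (- \<delta> / 2 * X \<omega>))" for \<omega>
  have "integrable M G"
    unfolding G_def using mgf[of "\<delta> / 2"] mgf[of "- \<delta> / 2"] \<open>\<delta> > 0\<close> by auto
  define B where "B = expectation G"
  have "B \<ge> 0"
    unfolding B_def G_def by (intro integral_nonneg_AE) (use \<open>\<delta> > 0\<close> in auto)
  have "expectation (\<lambda>\<omega>. exp (s * X \<omega>)) \<le> exp (B * s\<^sup>2)" if s: "\<bar>s\<bar> \<le> \<delta> / 4" for s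
  proof -
    have "exp (s * X \<omega>) \<le> 1 + s * X \<omega> + s\<^sup>2 * G \<omega>" for \<omega>
    proof -
      \<comment> \<open>\<open>G\<close> dominates \<open>X\<^sup>2 exp \<bar>s X\<bar>\<close> uniformly in \<open>\<bar>s\<bar> \<le> \<delta>/4\<close>.\<close>
      have "exp \<bar>s * X \<omega>\<bar> \<le> exp (\<delta> * \<bar>X \<omega>\<bar> / 4)"
        using mult_right_mono[OF s abs_ge_zero[of "X \<omega>"]] by (simp add: abs_mult)
      then have "(X \<omega>)\<^sup>2 * exp \<bar>s * X \<omega>\<bar> \<le> 32 / \<delta>\<^sup>2 * exp (\<delta> * \<bar>X \<omega>\<bar> / 4) * exp (\<delta> * \<bar>X \<omega>\<bar> / 4)"
        using sq_le_exp_abs[OF \<open>\<delta> > 0\<close>] by (intro mult_mono) auto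
      also have "\<dots> = 32 / \<delta>\<^sup>2 * exp (\<delta> * \<bar>X \<omega>\<bar> / 2)"
        by (simp flip: exp_add)
      also have "\<dots> \<le> G \<omega>"
        unfolding G_def by (intro mult_left_mono) (auto simp: abs_if add_increasing add_increasing2)
      finally have "(s * X \<omega>)\<^sup>2 * exp \<bar>s * X \<omega>\<bar> \<le> s\<^sup>2 * G \<omega>"
        by (simp add: power_mult_distrib mult.assoc mult_left_mono)
      then show ?thesis
        using exp_le_linear_plus_sq_exp_abs[of "s * X \<omega>"] by linarith
    qed
    then have "expectation (\<lambda>\<omega>. exp (s * X \<omega>)) \<le> expectation (\<lambda>\<omega>. 1 + s * X \<omega> + s\<^sup>2 * G \<omega>)"
      using mgf[of s] s \<open>\<delta> > 0\<close> \<open>integrable M X\<close> \<open>integrable M G\<close> by (intro integral_mono) auto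
    also have "\<dots> = 1 + B * s\<^sup>2"
      using \<open>integrable M X\<close> \<open>integrable M G\<close> \<open>expectation X = 0\<close>
      by (simp add: B_def prob_space mult.commute)
    also have "\<dots> \<le> exp (B * s\<^sup>2)"
      by (rule exp_ge_add_one_self)
    finally show ?thesis .
  qed
  moreover have "integrable M (\<lambda>\<omega>. exp (s * X \<omega>))" if "\<bar>s\<bar> \<le> \<delta> / 4" for s
    using mgf[of s] that \<open>\<delta> > 0\<close> by simp
  ultimately show ?thesis
    using \<open>B \<ge> 0\<close> unfolding local_subgaussian_def by blast
qed

lemma identical_distr_integrable_expectation:
  fixes X Y :: "'a \<Rightarrow> real" and g :: "real \<Rightarrow> real"
  assumes [measurable]: "X \<in> borel_measurable M" "Y \<in> borel_measurable M" "g \<in> borel_measurable borel"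
    and distr_eq: "distr M borel X = distr M borel Y"
    and "integrable M (\<lambda>\<omega>. g (Y \<omega>))"
  shows "integrable M (\<lambda>\<omega>. g (X \<omega>))"
    and "expectation (\<lambda>\<omega>. g (X \<omega>)) = expectation (\<lambda>\<omega>. g (Y \<omega>))"
proof -
  show "integrable M (\<lambda>\<omega>. g (X \<omega>))"
    using assms(5) integrable_distr_eq[of X M borel g] integrable_distr_eq[of Y M borel g]
    by (simp add: distr_eq)
  have "expectation (\<lambda>\<omega>. g (X \<omega>)) = integral\<^sup>L (distr M borel X) g"
    by (simp add: integral_distr)
  also have "\<dots> = expectation (\<lambda>\<omega>. g (Y \<omega>))"
    by (simp add: distr_eq integral_distr)
  finally show "expectation (\<lambda>\<omega>. g (X \<omega>)) = expectation (\<lambda>\<omega>. g (Y \<omega>))" .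
qed

lemma local_subgaussian_identical_distr:
  assumes [measurable]: "X \<in> borel_measurable M" "Y \<in> borel_measurable M"
    and "distr M borel X = distr M borel Y" and "local_subgaussian Y B s\<^sub>0"
  shows "local_subgaussian X B s\<^sub>0"
  using assms identical_distr_integrable_expectation[of X Y "\<lambda>x. exp (_ * x)"]
  unfolding local_subgaussian_def by simp

lemma chernoff_indep_sum:
  fixes Y :: "'i \<Rightarrow> 'a \<Rightarrow> real"
  assumes "finite K" and indep: "indep_vars (\<lambda>_. borel) Y K" and "t > 0"
    and integrable: "\<And>k. k \<in> K \<Longrightarrow> integrable M (\<lambda>\<omega>. exp (t * Y k \<omega>))"
  shows "measure M {\<omega>\<in>space M. a \<le> (\<Sum>k\<in>K. Y k \<omega>)}
           \<le> (\<Prod>k\<in>K. expectation (\<lambda>\<omega>. exp (t * Y k \<omega>))) / exp (t * a)"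
proof -
  have [measurable]: "Y k \<in> borel_measurable M" if "k \<in> K" for k
    using indep that by (simp add: indep_vars_def)
  define P where "P \<omega> = (\<Prod>k\<in>K. exp (t * Y k \<omega>))" for \<omega>
  have indep_exp: "indep_vars (\<lambda>_. borel) (\<lambda>k \<omega>. exp (t * Y k \<omega>)) K"
    by (rule indep_vars_compose2[OF indep]) simp
  have "{\<omega>\<in>space M. a \<le> (\<Sum>k\<in>K. Y k \<omega>)} = {\<omega>\<in>space M. exp (t * a) \<le> P \<omega>}"
    using \<open>t > 0\<close> by (simp add: P_def \<open>finite K\<close> flip: exp_sum sum_distrib_left)
  also have "measure M \<dots> \<le> expectation P / exp (t * a)"
    using indep_vars_integrable[OF \<open>finite K\<close> indep_exp integrable]
    by (intro integral_Markov_inequality_measure[where A="space M"]) (auto simp: P_def prod_nonneg)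
  also have "expectation P = (\<Prod>k\<in>K. expectation (\<lambda>\<omega>. exp (t * Y k \<omega>)))"
    unfolding P_def by (rule indep_vars_lebesgue_integral[OF \<open>finite K\<close> indep_exp integrable])
  finally show ?thesis .
qed

end

definition fold_coeff :: "(nat \<Rightarrow> real) \<Rightarrow> nat \<Rightarrow> nat \<Rightarrow> real" where
  "fold_coeff b n k = (\<Sum>j | j < n \<and> min j (n - j) = k. b j)"

lemma sum_min_index_eq_fold_coeff:
  "(\<Sum>j<n. b j * f (min j (n - j))) = (\<Sum>k\<in>(\<lambda>j. min j (n - j)) ` {..<n}. fold_coeff b n k * f k)"
proof -
  have "(\<Sum>j<n. b j * f (min j (n - j)))
        = (\<Sum>k\<in>(\<lambda>j. min j (n - j)) ` {..<n}. \<Sum>j | j \<in> {..<n} \<and> min j (n - j) = k. b j * f (min j (n - j)))"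
    by (rule sum.image_gen) simp
  also have "\<dots> = (\<Sum>k\<in>(\<lambda>j. min j (n - j)) ` {..<n}. fold_coeff b n k * f k)"
    unfolding fold_coeff_def sum_distrib_right by (intro sum.cong) auto
  finally show ?thesis .
qed

lemma abs_fold_coeff_le:
  assumes "\<And>j. \<bar>b j\<bar> \<le> 1" shows "\<bar>fold_coeff b n k\<bar> \<le> 2"
proof -
  have "{j. j < n \<and> min j (n - j) = k} \<subseteq> {k, n - k}"
    by auto
  then have "card {j. j < n \<and> min j (n - j) = k} \<le> card {k, n - k}"
    by (intro card_mono) auto
  also have "\<dots> \<le> 2"
    by (cases "k = n - k") auto
  finally have card_le: "card {j. j < n \<and> min j (n - j) = k} \<le> 2" .
  have "\<bar>fold_coeff b n k\<bar> \<le> (\<Sum>j | j < n \<and> min j (n - j) = k. \<bar>b j\<bar>)"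
    unfolding fold_coeff_def by (rule sum_abs)
  also have "\<dots> \<le> real (card {j. j < n \<and> min j (n - j) = k}) * 1"
    using assms by (intro sum_bounded_above) auto
  also have "\<dots> \<le> 2"
    using card_le by simp
  finally show ?thesis .
qed

definition trig_poly :: "(nat \<Rightarrow> real) \<Rightarrow> nat \<Rightarrow> real \<Rightarrow> complex" where
  "trig_poly \<eta> n x = (\<Sum>j<n. complex_of_real (\<eta> j) * exp (\<i> * complex_of_real (real j * x)))"

lemma Wsym_eq_trig_poly: "Wsym \<xi> n \<omega> = trig_poly (\<lambda>j. sym_coeff \<xi> n j \<omega>) n"
  by (simp add: fun_eq_iff Wsym_def trig_poly_def)

lemma norm_exp_i_diff_le:
  "cmod (exp (\<i> * complex_of_real a) - exp (\<i> * complex_of_real b)) \<le> \<bar>a - b\<bar>"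
proof -
  have "exp (\<i> * complex_of_real a) - exp (\<i> * complex_of_real b)
        = exp (\<i> * complex_of_real b) * (exp (\<i> * complex_of_real (a - b)) - 1)"
    by (simp add: algebra_simps flip: exp_add)
  then have "cmod (exp (\<i> * complex_of_real a) - exp (\<i> * complex_of_real b))
             = cmod (exp (\<i> * complex_of_real (a - b)) - 1)"
    by (simp add: norm_mult)
  also have "\<dots> \<le> \<bar>a - b\<bar>"
    using iexp_approx1[of "a - b" 0] by simp
  finally show ?thesis .
qed

lemma trig_poly_lipschitz:
  "cmod (trig_poly \<eta> n x - trig_poly \<eta> n y) \<le> real n * (\<Sum>j<n. \<bar>\<eta> j\<bar>) * \<bar>x - y\<bar>"
proof -
  have "cmod (trig_poly \<eta> n x - trig_poly \<eta> n y)
        = cmod (\<Sum>j<n. complex_of_real (\<eta> j) *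
            (exp (\<i> * complex_of_real (real j * x)) - exp (\<i> * complex_of_real (real j * y))))"
    by (simp add: trig_poly_def sum_subtractf algebra_simps)
  also have "\<dots> \<le> (\<Sum>j<n. \<bar>\<eta> j\<bar> * (real n * \<bar>x - y\<bar>))"
  proof (intro order.trans[OF norm_sum] sum_mono)
    fix j assume "j \<in> {..<n}"
    then have "\<bar>real j * x - real j * y\<bar> \<le> real n * \<bar>x - y\<bar>"
      by (simp add: abs_mult mult_right_mono flip: right_diff_distrib)
    then show "cmod (complex_of_real (\<eta> j) * (exp (\<i> * complex_of_real (real j * x))
                 - exp (\<i> * complex_of_real (real j * y)))) \<le> \<bar>\<eta> j\<bar> * (real n * \<bar>x - y\<bar>)"
      using norm_exp_i_diff_le[of "real j * x" "real j * y"] by (simp add: norm_mult mult_left_mono)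
  qed
  also have "\<dots> = real n * (\<Sum>j<n. \<bar>\<eta> j\<bar>) * \<bar>x - y\<bar>"
    by (simp add: sum_distrib_left sum_distrib_right ac_simps)
  finally show ?thesis .
qed

lemma trig_poly_periodic: "trig_poly \<eta> n (x + 2 * pi * of_int k) = trig_poly \<eta> n x"
proof -
  have "exp (\<i> * complex_of_real (real j * (x + 2 * pi * of_int k))) = exp (\<i> * complex_of_real (real j * x))" for j
  proof -
    have "exp (\<i> * complex_of_real (real j * (x + 2 * pi * of_int k)))
          = cis (real j * x) * cis (2 * pi * of_int (int j * k))"
      by (simp add: cis_conv_exp algebra_simps flip: exp_add)
    also have "cis (2 * pi * of_int (int j * k)) = 1"
      by (metis cis_multiple_2pi Ints_of_int mult.commute)
    finally show ?thesis
      by (simp add: cis_conv_exp)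
  qed
  then show ?thesis
    by (simp add: trig_poly_def)
qed

lemma trig_poly_norm_le_grid:
  assumes "h > 0"
    and grid: "\<And>m. m \<le> nat \<lceil>2 * pi / h\<rceil> \<Longrightarrow> cmod (trig_poly \<eta> n (real m * h)) \<le> A"
  shows "cmod (trig_poly \<eta> n x) \<le> A + real n * (\<Sum>j<n. \<bar>\<eta> j\<bar>) * h"
proof -
  define x' where "x' = 2 * pi * frac (x / (2 * pi))"
  have "x = x' + 2 * pi * of_int \<lfloor>x / (2 * pi)\<rfloor>"
    by (simp add: x'_def frac_def algebra_simps)
  then have "trig_poly \<eta> n x = trig_poly \<eta> n x'"
    by (metis trig_poly_periodic)
  have "0 \<le> x'" "x' < 2 * pi"
    using frac_lt_1[of "x / (2 * pi)"] by (simp_all add: x'_def)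
  define m where "m = nat \<lfloor>x' / h\<rfloor>"
  have "real m = of_int \<lfloor>x' / h\<rfloor>"
    using \<open>0 \<le> x'\<close> \<open>h > 0\<close> by (simp add: m_def)
  then have "real m \<le> x' / h" "x' / h < real m + 1"
    by linarith+
  then have "\<bar>x' - real m * h\<bar> \<le> h"
    using \<open>h > 0\<close> by (simp add: field_simps)
  have "m \<le> nat \<lceil>2 * pi / h\<rceil>"
    using \<open>x' < 2 * pi\<close> \<open>h > 0\<close> divide_right_mono[of x' "2 * pi" h]
    unfolding m_def by linarith
  have "cmod (trig_poly \<eta> n x') \<le> cmod (trig_poly \<eta> n (real m * h))
          + cmod (trig_poly \<eta> n x' - trig_poly \<eta> n (real m * h))"
    by (metis norm_triangle_sub add.commute)
  also have "\<dots> \<le> A + real n * (\<Sum>j<n. \<bar>\<eta> j\<bar>) * h"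
    using grid[OF \<open>m \<le> _\<close>] trig_poly_lipschitz[of \<eta> n x' "real m * h"]
      mult_left_mono[OF \<open>\<bar>x' - real m * h\<bar> \<le> h\<close>, of "real n * (\<Sum>j<n. \<bar>\<eta> j\<bar>)"]
    by (simp add: sum_nonneg)
  finally show ?thesis
    using \<open>trig_poly \<eta> n x = trig_poly \<eta> n x'\<close> by simp
qed

lemma Wsym_supnorm_le_grid:
  assumes "h > 0"
    and "\<And>m. m \<le> nat \<lceil>2 * pi / h\<rceil> \<Longrightarrow> cmod (Wsym \<xi> n \<omega> (real m * h)) \<le> A"
  shows "Wsym_supnorm \<xi> n \<omega> \<le> A + real n * (\<Sum>j<n. \<bar>sym_coeff \<xi> n j \<omega>\<bar>) * h"
  using assms unfolding Wsym_supnorm_def Wsym_eq_trig_poly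
  by (intro cSUP_least trig_poly_norm_le_grid) auto

lemma Wsym_supnorm_large_cases:
  assumes "n > 0" and "T > 2" and "T \<le> Wsym_supnorm \<xi> n \<omega>"
  shows "real n ^ 3 \<le> (\<Sum>j<n. \<bar>sym_coeff \<xi> n j \<omega>\<bar>) \<or>
    (\<exists>k \<le> nat \<lceil>2 * pi * real n ^ 4\<rceil>. T / 2 \<le> cmod (Wsym \<xi> n \<omega> (real k / real n ^ 4)))"
proof (rule ccontr)
  define h where "h = 1 / real n ^ 4"
  have "h > 0"
    using \<open>n > 0\<close> by (simp add: h_def)
  assume "\<not> ?thesis"
  then have small_l1: "(\<Sum>j<n. \<bar>sym_coeff \<xi> n j \<omega>\<bar>) \<le> real n ^ 3"
    and grid: "\<forall>k \<le> nat \<lceil>2 * pi * real n ^ 4\<rceil>. cmod (Wsym \<xi> n \<omega> (real k / real n ^ 4)) \<le> T / 2"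
    by auto
  have "Wsym_supnorm \<xi> n \<omega> \<le> T / 2 + real n * (\<Sum>j<n. \<bar>sym_coeff \<xi> n j \<omega>\<bar>) * h"
    using \<open>h > 0\<close> grid by (intro Wsym_supnorm_le_grid) (simp_all add: h_def)
  also have "\<dots> \<le> T / 2 + real n * real n ^ 3 * h"
    using small_l1 \<open>h > 0\<close> by (simp add: mult_left_mono mult_right_mono)
  also have "real n * real n ^ 3 * h = 1"
    using \<open>n > 0\<close> by (simp add: h_def power_eq_if)
  finally show False
    using assms(2,3) by linarith
qed

lemma grid_size_le: "n \<ge> 1 \<Longrightarrow> real (Suc (nat \<lceil>2 * pi * real n ^ 4\<rceil>)) \<le> 10 * real n ^ 4"
proof -
  assume "n \<ge> 1"
  then have "2 * pi * real n ^ 4 \<le> 8 * real n ^ 4" and "1 \<le> real n ^ 4"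
    using pi_less_4 by simp_all
  have "real (Suc (nat \<lceil>2 * pi * real n ^ 4\<rceil>)) = 1 + real_of_int \<lceil>2 * pi * real n ^ 4\<rceil>"
    by simp
  also have "\<dots> \<le> 2 + 2 * pi * real n ^ 4"
    using of_int_ceiling_le_add_one[of "2 * pi * real n ^ 4"] by linarith
  finally show ?thesis
    using \<open>2 * pi * real n ^ 4 \<le> 8 * real n ^ 4\<close> \<open>1 \<le> real n ^ 4\<close> by linarith
qed

context prob_space
begin

lemma sym_weighted_sum_tail:
  fixes \<xi> :: "nat \<Rightarrow> 'a \<Rightarrow> real"
  assumes indep: "indep_vars (\<lambda>_. borel) \<xi> UNIV"
    and subg: "\<And>k. local_subgaussian (\<xi> k) B (2 * t)" and "B \<ge> 0" and "t > 0"
    and b: "\<And>j. \<bar>b j\<bar> \<le> 1"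
  shows "measure M {\<omega>\<in>space M. a \<le> (\<Sum>j<n. b j * sym_coeff \<xi> n j \<omega>)}
           \<le> exp (4 * B * t\<^sup>2 * real n - t * a)"
proof -
  define K where "K = (\<lambda>j. min j (n - j)) ` {..<n}"
  define c where "c = fold_coeff b n"
  have "\<bar>t * c k\<bar> \<le> 2 * t" for k
    using abs_fold_coeff_le[OF b] \<open>t > 0\<close> by (simp add: c_def abs_mult)
  then have mgf_c: "integrable M (\<lambda>\<omega>. exp (t * (c k * \<xi> k \<omega>)))"
      "expectation (\<lambda>\<omega>. exp (t * (c k * \<xi> k \<omega>))) \<le> exp (B * (t * c k)\<^sup>2)" for k
    using subg[of k, unfolded local_subgaussian_def, rule_format, of "t * c k"]
    by (simp_all add: mult.assoc)
  have "(c k)\<^sup>2 \<le> 4" for k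
    using abs_fold_coeff_le[of b n k, OF b] abs_le_square_iff[of "c k" 2] by (simp add: c_def)
  then have mgf_bound: "expectation (\<lambda>\<omega>. exp (t * (c k * \<xi> k \<omega>))) \<le> exp (4 * B * t\<^sup>2)" for k
    using mgf_c(2)[of k] mult_left_mono[OF mult_left_mono[of "(c k)\<^sup>2" 4 "t\<^sup>2"] \<open>B \<ge> 0\<close>]
    by (simp add: power_mult_distrib mult_ac order_trans)
  have indep_K: "indep_vars (\<lambda>_. borel) (\<lambda>k \<omega>. c k * \<xi> k \<omega>) K"
    by (rule indep_vars_compose2[where Y="\<lambda>k x. c k * x", OF indep_vars_subset[OF indep]]) auto
  have "(\<Sum>j<n. b j * sym_coeff \<xi> n j \<omega>) = (\<Sum>k\<in>K. c k * \<xi> k \<omega>)" for \<omega>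
    unfolding sym_coeff_def K_def c_def by (rule sum_min_index_eq_fold_coeff)
  then have "{\<omega>\<in>space M. a \<le> (\<Sum>j<n. b j * sym_coeff \<xi> n j \<omega>)} = {\<omega>\<in>space M. a \<le> (\<Sum>k\<in>K. c k * \<xi> k \<omega>)}"
    by simp
  also have "measure M \<dots> \<le> (\<Prod>k\<in>K. expectation (\<lambda>\<omega>. exp (t * (c k * \<xi> k \<omega>)))) / exp (t * a)"
    using mgf_c(1) by (intro chernoff_indep_sum indep_K \<open>t > 0\<close>) (auto simp: K_def)
  also have "\<dots> \<le> (\<Prod>k\<in>K. exp (4 * B * t\<^sup>2)) / exp (t * a)"
    using mgf_bound by (intro divide_right_mono prod_mono conjI integral_nonneg_AE) auto
  also have "\<dots> = exp (real (card K) * (4 * B * t\<^sup>2)) / exp (t * a)"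
    by (simp add: exp_of_nat_mult)
  also have "\<dots> \<le> exp (4 * B * t\<^sup>2 * real n) / exp (t * a)"
    using card_image_le[of "{..<n}" "\<lambda>j. min j (n - j)"] \<open>B \<ge> 0\<close>
    by (intro divide_right_mono) (simp_all add: K_def mult_right_mono mult.commute)
  finally show ?thesis
    by (simp add: exp_diff)
qed

lemma Wsym_point_tail:
  fixes \<xi> :: "nat \<Rightarrow> 'a \<Rightarrow> real"
  assumes indep: "indep_vars (\<lambda>_. borel) \<xi> UNIV"
    and subg: "\<And>k. local_subgaussian (\<xi> k) B (2 * t)" and "B \<ge> 0" and "t > 0"
  shows "measure M {\<omega>\<in>space M. 2 * a \<le> cmod (Wsym \<xi> n \<omega> x)}
           \<le> 4 * exp (4 * B * t\<^sup>2 * real n - t * a)"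
proof -
  have [measurable]: "\<xi> k \<in> borel_measurable M" for k
    using indep by (simp add: indep_vars_def)
  define E where "E b = {\<omega>\<in>space M. a \<le> (\<Sum>j<n. b j * sym_coeff \<xi> n j \<omega>)}" for b
  define bs where "bs = {\<lambda>j. cos (real j * x), \<lambda>j. - cos (real j * x), \<lambda>j. sin (real j * x), \<lambda>j. - sin (real j * x)}"
  have "{\<omega>\<in>space M. 2 * a \<le> cmod (Wsym \<xi> n \<omega> x)} \<subseteq> (\<Union>b\<in>bs. E b)"
  proof safe
    fix \<omega> assume "\<omega> \<in> space M" and large: "2 * a \<le> cmod (Wsym \<xi> n \<omega> x)"
    have "Re (Wsym \<xi> n \<omega> x) = (\<Sum>j<n. cos (real j * x) * sym_coeff \<xi> n j \<omega>)"
      and "Im (Wsym \<xi> n \<omega> x) = (\<Sum>j<n. sin (real j * x) * sym_coeff \<xi> n j \<omega>)"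
      by (simp_all add: Wsym_def Re_exp Im_exp mult.commute)
    moreover have "cmod (Wsym \<xi> n \<omega> x) \<le> \<bar>Re (Wsym \<xi> n \<omega> x)\<bar> + \<bar>Im (Wsym \<xi> n \<omega> x)\<bar>"
      by (rule cmod_le)
    ultimately show "\<omega> \<in> (\<Union>b\<in>bs. E b)"
      using large \<open>\<omega> \<in> space M\<close> by (auto simp: bs_def E_def abs_if sum_negf split: if_splits)
  qed
  then have "measure M {\<omega>\<in>space M. 2 * a \<le> cmod (Wsym \<xi> n \<omega> x)} \<le> measure M (\<Union>b\<in>bs. E b)"
    by (intro finite_measure_mono) (auto simp: bs_def E_def sym_coeff_def)
  also have "\<dots> \<le> (\<Sum>b\<in>bs. measure M (E b))"
    by (intro finite_measure_subadditive_finite) (auto simp: bs_def E_def sym_coeff_def)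
  also have "\<dots> \<le> real (card bs) * exp (4 * B * t\<^sup>2 * real n - t * a)"
    unfolding E_def using subg \<open>B \<ge> 0\<close> \<open>t > 0\<close>
    by (intro sum_bounded_above sym_weighted_sum_tail[OF indep]) (auto simp: bs_def)
  also have "\<dots> \<le> 4 * exp (4 * B * t\<^sup>2 * real n - t * a)"
    by (intro mult_right_mono) (auto simp: bs_def card_insert_if)
  finally show ?thesis .
qed

lemma sym_l1_norm_tail:
  fixes \<xi> :: "nat \<Rightarrow> 'a \<Rightarrow> real"
  assumes integrable: "\<And>k. integrable M (\<lambda>\<omega>. \<bar>\<xi> k \<omega>\<bar>)"
    and first_moment: "\<And>k. expectation (\<lambda>\<omega>. \<bar>\<xi> k \<omega>\<bar>) \<le> m" and "c > 0"
  shows "measure M {\<omega>\<in>space M. c \<le> (\<Sum>j<n. \<bar>sym_coeff \<xi> n j \<omega>\<bar>)} \<le> real n * m / c"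
proof -
  have "measure M {\<omega>\<in>space M. c \<le> (\<Sum>j<n. \<bar>sym_coeff \<xi> n j \<omega>\<bar>)}
        \<le> expectation (\<lambda>\<omega>. \<Sum>j<n. \<bar>sym_coeff \<xi> n j \<omega>\<bar>) / c"
    using integrable \<open>c > 0\<close>
    by (intro integral_Markov_inequality_measure[where A="space M"]) (auto simp: sym_coeff_def)
  also have "\<dots> \<le> real n * m / c"
    using integrable first_moment sum_mono[of "{..<n}" "\<lambda>j. expectation (\<lambda>\<omega>. \<bar>sym_coeff \<xi> n j \<omega>\<bar>)" "\<lambda>_. m"]
    by (intro divide_right_mono) (simp_all add: \<open>c > 0\<close> less_imp_le sym_coeff_def)
  finally show ?thesis .
qed

lemma Wsym_grid_point_tail:
  fixes \<xi> :: "nat \<Rightarrow> 'a \<Rightarrow> real"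
  assumes indep: "indep_vars (\<lambda>_. borel) \<xi> UNIV"
    and subg: "\<And>k. local_subgaussian (\<xi> k) B s\<^sub>0" and "B \<ge> 0" and "s\<^sub>0 > 0"
    and C\<^sub>0: "s\<^sub>0 * C\<^sub>0 \<ge> 48 + 8 * B * s\<^sub>0\<^sup>2" and "n \<ge> 2"
  shows "measure M {\<omega>\<in>space M. C\<^sub>0 * sqrt (real n * ln (real n)) / 2 \<le> cmod (Wsym \<xi> n \<omega> x)}
           \<le> 4 / real n ^ 6"
proof -
  define L where "L = ln (real n)"
  have "L > 0" "L \<le> real n"
    using \<open>n \<ge> 2\<close> by (simp_all add: L_def ln_le_minus_one less_imp_le)
  \<comment> \<open>With this choice the Chernoff exponent at level \<open>C\<^sub>0 sqrt (n L) / 2\<close> is at most \<open>-6 L\<close>.\<close>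
  define t where "t = s\<^sub>0 / 2 * sqrt (L / real n)"
  have "t > 0" "2 * t \<le> s\<^sub>0"
    using \<open>L > 0\<close> \<open>L \<le> real n\<close> \<open>s\<^sub>0 > 0\<close> \<open>n \<ge> 2\<close> by (simp_all add: t_def)
  have "4 * B * t\<^sup>2 * real n = B * s\<^sub>0\<^sup>2 * L"
    using \<open>n \<ge> 2\<close> \<open>L > 0\<close> by (simp add: t_def power_mult_distrib power_divide)
  moreover have "t * (C\<^sub>0 * sqrt (real n * L) / 4) = s\<^sub>0 * C\<^sub>0 * L / 8"
    using \<open>n \<ge> 2\<close> \<open>L > 0\<close> by (simp add: t_def real_sqrt_divide real_sqrt_mult)
  moreover have "B * s\<^sub>0\<^sup>2 * L - s\<^sub>0 * C\<^sub>0 * L / 8 \<le> - 6 * L"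
    using mult_right_mono[OF C\<^sub>0, of L] \<open>L > 0\<close> by (simp add: algebra_simps)
  ultimately have exponent: "4 * B * t\<^sup>2 * real n - t * (C\<^sub>0 * sqrt (real n * L) / 4) \<le> - 6 * L"
    by linarith
  have "measure M {\<omega>\<in>space M. C\<^sub>0 * sqrt (real n * L) / 2 \<le> cmod (Wsym \<xi> n \<omega> x)}
        \<le> 4 * exp (4 * B * t\<^sup>2 * real n - t * (C\<^sub>0 * sqrt (real n * L) / 4))"
    using Wsym_point_tail[OF indep local_subgaussian_mono[OF subg \<open>2 * t \<le> s\<^sub>0\<close>] \<open>B \<ge> 0\<close> \<open>t > 0\<close>,
        of "C\<^sub>0 * sqrt (real n * L) / 4" n x]
    by simp
  also have "\<dots> \<le> 4 * exp (- 6 * L)"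
    using exponent by simp
  also have "exp (- 6 * L) = 1 / exp L ^ 6"
    using exp_of_nat_mult[of 6 L] by (simp add: exp_minus inverse_eq_divide)
  also have "exp L = real n"
    using \<open>n \<ge> 2\<close> by (simp add: L_def)
  finally show ?thesis
    by (simp add: L_def)
qed

lemma Wsym_supnorm_tail:
  fixes \<xi> :: "nat \<Rightarrow> 'a \<Rightarrow> real"
  assumes indep: "indep_vars (\<lambda>_. borel) \<xi> UNIV"
    and subg: "\<And>k. local_subgaussian (\<xi> k) B s\<^sub>0" and "B \<ge> 0" and "s\<^sub>0 > 0"
    and integrable: "\<And>k. integrable M (\<lambda>\<omega>. \<bar>\<xi> k \<omega>\<bar>)"
    and first_moment: "\<And>k. expectation (\<lambda>\<omega>. \<bar>\<xi> k \<omega>\<bar>) \<le> m"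
    and "C\<^sub>0 \<ge> 4" and C\<^sub>0: "s\<^sub>0 * C\<^sub>0 \<ge> 48 + 8 * B * s\<^sub>0\<^sup>2" and "n \<ge> 2"
  shows "measure M {\<omega>\<in>space M. C\<^sub>0 * sqrt (real n * ln (real n)) \<le> Wsym_supnorm \<xi> n \<omega>}
           \<le> (m + 40) / (real n)\<^sup>2"
proof -
  have [measurable]: "\<xi> k \<in> borel_measurable M" for k
    using indep by (simp add: indep_vars_def)
  define T where "T = C\<^sub>0 * sqrt (real n * ln (real n))"
  have "ln 2 \<le> ln (real n)"
    using \<open>n \<ge> 2\<close> by simp
  then have "2 / 3 \<le> ln (real n)"
    using ln2_ge_two_thirds by linarith
  then have "2 * (2 / 3) \<le> real n * ln (real n)"
    using \<open>n \<ge> 2\<close> by (intro mult_mono) auto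
  then have "T > 2"
    using \<open>C\<^sub>0 \<ge> 4\<close> mult_mono[of 4 C\<^sub>0 1 "sqrt (real n * ln (real n))"] by (simp add: T_def)
  define N where "N = nat \<lceil>2 * pi * real n ^ 4\<rceil>"
  define Big where "Big = {\<omega>\<in>space M. real n ^ 3 \<le> (\<Sum>j<n. \<bar>sym_coeff \<xi> n j \<omega>\<bar>)}"
  define Grid where "Grid k = {\<omega>\<in>space M. T / 2 \<le> cmod (Wsym \<xi> n \<omega> (real k / real n ^ 4))}" for k
  have [measurable]: "Big \<in> sets M" "Grid k \<in> sets M" for k
    unfolding Big_def Grid_def Wsym_def sym_coeff_def by measurable
  have "{\<omega>\<in>space M. T \<le> Wsym_supnorm \<xi> n \<omega>} \<subseteq> Big \<union> (\<Union>k\<le>N. Grid k)"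
  proof
    fix \<omega> assume "\<omega> \<in> {\<omega>\<in>space M. T \<le> Wsym_supnorm \<xi> n \<omega>}"
    then show "\<omega> \<in> Big \<union> (\<Union>k\<le>N. Grid k)"
      using Wsym_supnorm_large_cases[of n T \<xi> \<omega>] \<open>n \<ge> 2\<close> \<open>T > 2\<close>
      unfolding Big_def Grid_def N_def by auto
  qed
  then have "measure M {\<omega>\<in>space M. T \<le> Wsym_supnorm \<xi> n \<omega>} \<le> measure M (Big \<union> (\<Union>k\<le>N. Grid k))"
    by (intro finite_measure_mono) auto
  also have "\<dots> \<le> measure M Big + (\<Sum>k\<le>N. measure M (Grid k))"
    by (intro order.trans[OF measure_Un_le] add_left_mono finite_measure_subadditive_finite) auto
  also have "measure M Big \<le> m / (real n)\<^sup>2"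
    using sym_l1_norm_tail[OF integrable first_moment, where c="real n ^ 3" and n=n] \<open>n \<ge> 2\<close>
    by (simp add: Big_def power_eq_if)
  also have "(\<Sum>k\<le>N. measure M (Grid k)) \<le> real (Suc N) * (4 / real n ^ 6)"
    using Wsym_grid_point_tail[OF indep subg \<open>B \<ge> 0\<close> \<open>s\<^sub>0 > 0\<close> C\<^sub>0 \<open>n \<ge> 2\<close>]
      sum_bounded_above[of "{..N}" "\<lambda>k. measure M (Grid k)" "4 / real n ^ 6"]
    by (simp add: Grid_def T_def)
  also have "\<dots> \<le> 10 * real n ^ 4 * (4 / real n ^ 6)"
    using grid_size_le[of n] \<open>n \<ge> 2\<close> by (intro mult_right_mono) (simp_all add: N_def)
  also have "\<dots> = 40 / (real n)\<^sup>2"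
    using \<open>n \<ge> 2\<close> by (simp add: field_simps flip: power_add)
  finally show ?thesis
    by (simp add: T_def add_divide_distrib)
qed

lemma Wsym_supnorm_tail_uniform:
  fixes \<xi> :: "nat \<Rightarrow> 'a \<Rightarrow> real"
  assumes indep: "indep_vars (\<lambda>_. borel) \<xi> UNIV"
    and subg: "\<And>k. local_subgaussian (\<xi> k) B s\<^sub>0" and "B \<ge> 0" and "s\<^sub>0 > 0"
    and integrable: "\<And>k. integrable M (\<lambda>\<omega>. \<bar>\<xi> k \<omega>\<bar>)"
    and first_moment: "\<And>k. expectation (\<lambda>\<omega>. \<bar>\<xi> k \<omega>\<bar>) \<le> m" and "m \<ge> 0"
  shows "\<exists>C\<^sub>0>0. \<forall>n\<ge>1. measure M {\<omega>\<in>space M. C\<^sub>0 * sqrt (real n * ln (real n)) \<le> Wsym_supnorm \<xi> n \<omega>}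
           \<le> (m + 40) / (real n)\<^sup>2"
proof (intro exI conjI allI impI)
  define C\<^sub>0 where "C\<^sub>0 = max 4 ((48 + 8 * B * s\<^sub>0\<^sup>2) / s\<^sub>0)"
  show "C\<^sub>0 > 0"
    by (simp add: C\<^sub>0_def)
  have "s\<^sub>0 * C\<^sub>0 \<ge> s\<^sub>0 * ((48 + 8 * B * s\<^sub>0\<^sup>2) / s\<^sub>0)"
    using \<open>s\<^sub>0 > 0\<close> by (intro mult_left_mono) (simp_all add: C\<^sub>0_def)
  then have C\<^sub>0: "s\<^sub>0 * C\<^sub>0 \<ge> 48 + 8 * B * s\<^sub>0\<^sup>2"
    using \<open>s\<^sub>0 > 0\<close> by simp
  fix n :: nat assume "n \<ge> 1"
  show "measure M {\<omega>\<in>space M. C\<^sub>0 * sqrt (real n * ln (real n)) \<le> Wsym_supnorm \<xi> n \<omega>}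
          \<le> (m + 40) / (real n)\<^sup>2"
  proof (cases "n = 1")
    case True
    have "measure M {\<omega>\<in>space M. C\<^sub>0 * sqrt (real n * ln (real n)) \<le> Wsym_supnorm \<xi> n \<omega>} \<le> 1"
      by (rule prob_le_1)
    also have "1 \<le> (m + 40) / (real n)\<^sup>2"
      using True \<open>m \<ge> 0\<close> by simp
    finally show ?thesis .
  next
    case False
    with \<open>n \<ge> 1\<close> have "n \<ge> 2"
      by simp
    with C\<^sub>0 show ?thesis
      by (intro Wsym_supnorm_tail[OF indep subg \<open>B \<ge> 0\<close> \<open>s\<^sub>0 > 0\<close> integrable first_moment])
        (simp_all add: C\<^sub>0_def)
  qed
qed

end

theorem mainTheorem9:
  fixes M :: "'w measure" and \<xi> :: "nat \<Rightarrow> 'w \<Rightarrow> real"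
  assumes "prob_space M"
    and rv: "\<And>i. \<xi> i \<in> borel_measurable M"
    and indep: "prob_space.indep_vars M (\<lambda>_. borel) \<xi> UNIV"
    and ident: "\<And>i. distr M borel (\<xi> i) = distr M borel (\<xi> 0)"
    and int0: "integrable M (\<xi> 0)"
    and mean0: "prob_space.expectation M (\<xi> 0) = 0"
    and var_fin: "integrable M (\<lambda>\<omega>. (\<xi> 0 \<omega>)\<^sup>2)"
    and var_pos: "prob_space.variance M (\<xi> 0) > 0"
    and mgf: "\<exists>\<delta>>0. \<forall>t::real. \<bar>t\<bar> < \<delta> \<longrightarrow> integrable M (\<lambda>\<omega>. exp (t * \<xi> 0 \<omega>))"
  shows "\<exists>C0>0. \<exists>C1>0. \<forall>n::nat. n \<ge> 1 \<longrightarrow>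
           measure M {\<omega> \<in> space M. Wsym_supnorm \<xi> n \<omega> \<ge> C0 * sqrt (real n * ln (real n))}
             \<le> C1 / (real n)\<^sup>2"
proof -
  interpret prob_space M by fact
  obtain \<delta> where "\<delta> > 0" and mgf_\<delta>: "\<And>t. \<bar>t\<bar> < \<delta> \<Longrightarrow> integrable M (\<lambda>\<omega>. exp (t * \<xi> 0 \<omega>))"
    using mgf by blast
  obtain B where "B \<ge> 0" and subg_0: "local_subgaussian (\<xi> 0) B (\<delta> / 4)"
    using local_subgaussian_if_mgf_exists[OF rv int0 mean0 \<open>\<delta> > 0\<close> mgf_\<delta>] by blast
  have subg: "local_subgaussian (\<xi> k) B (\<delta> / 4)" for k
    by (rule local_subgaussian_identical_distr[OF rv rv ident subg_0])
  define m where "m = expectation (\<lambda>\<omega>. \<bar>\<xi> 0 \<omega>\<bar>)"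
  have abs_moments: "integrable M (\<lambda>\<omega>. \<bar>\<xi> k \<omega>\<bar>)" "expectation (\<lambda>\<omega>. \<bar>\<xi> k \<omega>\<bar>) \<le> m" for k
    using identical_distr_integrable_expectation[OF rv rv _ ident, of abs k] int0 by (simp_all add: m_def)
  have "m \<ge> 0"
    by (simp add: m_def)
  then obtain C\<^sub>0 where "C\<^sub>0 > 0" and "\<forall>n\<ge>1. measure M {\<omega>\<in>space M. C\<^sub>0 * sqrt (real n * ln (real n)) \<le> Wsym_supnorm \<xi> n \<omega>}
      \<le> (m + 40) / (real n)\<^sup>2"
    using Wsym_supnorm_tail_uniform[OF indep subg \<open>B \<ge> 0\<close> _ abs_moments] \<open>\<delta> > 0\<close> by auto
  moreover have "m + 40 > 0"
    using \<open>m \<ge> 0\<close> by simp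
  ultimately show ?thesis
    by blast
qed

end
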